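(* Let $r\ge1$. For any $\gamma\in\mathrm{GL}_r(F_\infty)$ there exist positive constants $c_1,c_2,c_3$ such that for every $\omega\in\Omega^r$: (a) $h(\omega)\le c_1|j(\gamma,\omega)|\,|\omega|^{-1}\le1$; (b) $|\gamma(\omega)|\le c_2\,h(\omega)^{-1}$; (c) $h(\gamma(\omega))\ge c_3\,h(\omega)$.
   Context: Let $F$ be a global function field, $\infty$ a place, $F_\infty$ the completion at $\infty$, $\mathbb{C}_\infty$ the completion of an algebraic closure of $F_\infty$ with absolute value $|\cdot|$. Fix $\xi\in\mathbb{C}_\infty^\times$. $\Omega^r$ is the set of column vectors $\omega=(\omega_1,\dots,\omega_r)^T\in\mathbb{C}_\infty^r$ with $F_\infty$-linearly independent entries and $\omega_r=\xi$. For $\gamma\in\mathrm{GL}_r(F_\infty)$: $j(\gamma,\omega):=\xi^{-1}\cdot(\text{last entry of }\gamma\omega)$ and $\gamma(\omega):=j(\gamma,\omega)^{-1}\gamma\omega\in\Omega^r$. A linear form $F_\infty^r\to F_\infty$ is unimodular if its largest coefficient has absolute value $1$. Put $|\omega|:=\max_i|\omega_i|$ and $h(\omega):=|\omega|^{-1}\inf\{|\ell(\omega)|:\ell$ a unimodular $F_\infty$-linear form$\}$. *)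

theory Defs
  imports "HOL-Computational_Algebra.Polynomial"
begin

text \<open>The field C_infinity is modelled by a type 'a of class field carrying a function
 av :: 'a => real (the absolute value); F_infinity is a subset K of 'a.\<close>

definition nonarch_abs :: "('a::field \<Rightarrow> real) \<Rightarrow> bool" where
  "nonarch_abs av \<longleftrightarrow>
     (\<forall>x. 0 \<le> av x) \<and> (\<forall>x. av x = 0 \<longleftrightarrow> x = 0) \<and>
     (\<forall>x y. av (x * y) = av x * av y) \<and> (\<forall>x y. av (x + y) \<le> max (av x) (av y))"

definition av_cauchy :: "('a::field \<Rightarrow> real) \<Rightarrow> (nat \<Rightarrow> 'a) \<Rightarrow> bool" where
  "av_cauchy av X \<longleftrightarrow> (\<forall>e>0. \<exists>N. \<forall>m\<ge>N. \<forall>n\<ge>N. av (X m - X n) < e)"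

definition av_lim :: "('a::field \<Rightarrow> real) \<Rightarrow> (nat \<Rightarrow> 'a) \<Rightarrow> 'a \<Rightarrow> bool" where
  "av_lim av X L \<longleftrightarrow> (\<forall>e>0. \<exists>N. \<forall>n\<ge>N. av (X n - L) < e)"

definition is_subfield :: "'a::field set \<Rightarrow> bool" where
  "is_subfield K \<longleftrightarrow> 0 \<in> K \<and> 1 \<in> K \<and> (\<forall>x\<in>K. \<forall>y\<in>K. x + y \<in> K \<and> x * y \<in> K) \<and>
     (\<forall>x\<in>K. - x \<in> K \<and> inverse x \<in> K)"

definition algebraic_over :: "'a::field set \<Rightarrow> 'a \<Rightarrow> bool" where
  "algebraic_over K z \<longleftrightarrow> (\<exists>p. p \<noteq> 0 \<and> (\<forall>i. coeff p i \<in> K) \<and> poly p z = 0)"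

text \<open>Standing setup: K (= F_infinity) is a local field of positive characteristic
 (complete, discretely valued, finite residue field), i.e. the completion of a global
 function field at a place; 'a with av is (up to isometry) the completion C_infinity of an
 algebraic closure of K: complete, algebraically closed, with the algebraic closure of K dense.\<close>

definition Cinf_setup :: "('a::field \<Rightarrow> real) \<Rightarrow> 'a set \<Rightarrow> bool" where
  "Cinf_setup av K \<longleftrightarrow>
     nonarch_abs av \<and> is_subfield K \<and>
     (\<exists>p. prime p \<and> of_nat p = (0::'a)) \<and>
     (\<forall>X. av_cauchy av X \<longrightarrow> (\<exists>L. av_lim av X L)) \<and>
     (\<forall>X L. (\<forall>n. X n \<in> K) \<longrightarrow> av_lim av X L \<longrightarrow> L \<in> K) \<and>
     (\<exists>\<rho>::real. 0 < \<rho> \<and> \<rho> < 1 \<and> av ` (K - {0}) = range (\<lambda>n::int. \<rho> powi n)) \<and>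
     (\<exists>R. finite R \<and> R \<subseteq> K \<and> (\<forall>x\<in>K. av x \<le> 1 \<longrightarrow> (\<exists>c\<in>R. av (x - c) < 1))) \<and>
     (\<forall>q::'a poly. 0 < degree q \<longrightarrow> (\<exists>z. poly q z = 0)) \<and>
     (\<forall>z. \<forall>e>0. \<exists>y. algebraic_over K y \<and> av (z - y) < e)"

text \<open>Column vectors in C^r are functions nat => 'a (only indices < r matter);
 r x r matrices are functions nat => nat => 'a; index r-1 is the last entry.\<close>

definition GL_K :: "'a::field set \<Rightarrow> nat \<Rightarrow> (nat \<Rightarrow> nat \<Rightarrow> 'a) set" where
  "GL_K K r = {g. (\<forall>i<r. \<forall>k<r. g i k \<in> K) \<and>
      (\<exists>d. (\<forall>i<r. \<forall>k<r. d i k \<in> K) \<and>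
           (\<forall>i<r. \<forall>k<r. (\<Sum>l<r. g i l * d l k) = (if i = k then 1 else 0)) \<and>
           (\<forall>i<r. \<forall>k<r. (\<Sum>l<r. d i l * g l k) = (if i = k then 1 else 0)))}"

definition Omega :: "'a::field set \<Rightarrow> nat \<Rightarrow> 'a \<Rightarrow> (nat \<Rightarrow> 'a) set" where
  "Omega K r \<xi> = {w. (\<forall>a. (\<forall>i<r. a i \<in> K) \<longrightarrow> (\<Sum>i<r. a i * w i) = 0 \<longrightarrow> (\<forall>i<r. a i = 0))
                   \<and> w (r - 1) = \<xi>}"

definition matvec :: "nat \<Rightarrow> (nat \<Rightarrow> nat \<Rightarrow> 'a::field) \<Rightarrow> (nat \<Rightarrow> 'a) \<Rightarrow> nat \<Rightarrow> 'a" where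
  "matvec r g w = (\<lambda>i. \<Sum>k<r. g i k * w k)"

definition jfac :: "nat \<Rightarrow> 'a::field \<Rightarrow> (nat \<Rightarrow> nat \<Rightarrow> 'a) \<Rightarrow> (nat \<Rightarrow> 'a) \<Rightarrow> 'a" where
  "jfac r \<xi> g w = inverse \<xi> * matvec r g w (r - 1)"

definition gact :: "nat \<Rightarrow> 'a::field \<Rightarrow> (nat \<Rightarrow> nat \<Rightarrow> 'a) \<Rightarrow> (nat \<Rightarrow> 'a) \<Rightarrow> nat \<Rightarrow> 'a" where
  "gact r \<xi> g w = (\<lambda>i. inverse (jfac r \<xi> g w) * matvec r g w i)"

definition vnorm :: "('a::field \<Rightarrow> real) \<Rightarrow> nat \<Rightarrow> (nat \<Rightarrow> 'a) \<Rightarrow> real" where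
  "vnorm av r w = Max ((\<lambda>i. av (w i)) ` {..<r})"

definition unimodular :: "('a::field \<Rightarrow> real) \<Rightarrow> 'a set \<Rightarrow> nat \<Rightarrow> (nat \<Rightarrow> 'a) \<Rightarrow> bool" where
  "unimodular av K r l \<longleftrightarrow> (\<forall>i<r. l i \<in> K) \<and> Max ((\<lambda>i. av (l i)) ` {..<r}) = 1"

definition hgt :: "('a::field \<Rightarrow> real) \<Rightarrow> 'a set \<Rightarrow> nat \<Rightarrow> (nat \<Rightarrow> 'a) \<Rightarrow> real" where
  "hgt av K r w = inverse (vnorm av r w) *
     Inf {av (\<Sum>i<r. l i * w i) | l. unimodular av K r l}"

end

theory Submission
  imports Defs
begin

text \<open>Write I(\<omega>) for the infimum of |l(\<omega>)| over unimodular forms l, so that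
  h(\<omega>) = I(\<omega>) / |\<omega>|. For every F_\<infinity>-rational coefficient vector v one has
  |v| I(\<omega>) \<le> |v \<cdot> \<omega>| \<le> |v| |\<omega>|. Applied to the last row of \<gamma> (of norm R), this
  pins |\<xi> j(\<gamma>,\<omega>)| between R I(\<omega>) and R |\<omega>|, which is (a); (b) follows since
  |\<gamma>\<omega>| \<le> C |\<omega>| for C bounding the entries of \<gamma>. The height is invariant under
  scaling, and a unimodular form composed with \<gamma> has coefficients of norm at least 1/D,
  D bounding the entries of \<gamma>\<inverse>; hence I(\<gamma>\<omega>) \<ge> I(\<omega>)/D, which gives (c).

  The one analytic input is I(\<omega>) > 0, i.e. every coefficient of an F_\<infinity>-combination of
  \<omega>_1, ..., \<omega>_n is bounded by a multiple of its absolute value. This goes by induction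
  on n: if \<omega>_(n+1) were a limit of combinations of \<omega>_1, ..., \<omega>_n, the bound for n would
  make their coefficients Cauchy, and the limits in the complete, closed field F_\<infinity> would
  express \<omega>_(n+1) as such a combination. So \<omega>_(n+1) has positive distance from that
  span, which yields the bound for n + 1.\<close>

definition lin_indep_over :: "'a::field set \<Rightarrow> nat \<Rightarrow> (nat \<Rightarrow> 'a) \<Rightarrow> bool" where
  "lin_indep_over K n w \<longleftrightarrow>
     (\<forall>a. (\<forall>i<n. a i \<in> K) \<longrightarrow> (\<Sum>i<n. a i * w i) = 0 \<longrightarrow> (\<forall>i<n. a i = 0))"

definition lincomb_bounded_below :: "('a::field \<Rightarrow> real) \<Rightarrow> 'a set \<Rightarrow> nat \<Rightarrow> (nat \<Rightarrow> 'a) \<Rightarrow> real \<Rightarrow> bool" where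
  "lincomb_bounded_below av K n w c \<longleftrightarrow>
     (\<forall>a. (\<forall>i<n. a i \<in> K) \<longrightarrow> (\<forall>i<n. c * av (a i) \<le> av (\<Sum>i<n. a i * w i)))"

definition unimodular_inf :: "('a::field \<Rightarrow> real) \<Rightarrow> 'a set \<Rightarrow> nat \<Rightarrow> (nat \<Rightarrow> 'a) \<Rightarrow> real" where
  "unimodular_inf av K r w = Inf {av (\<Sum>i<r. l i * w i) | l. unimodular av K r l}"

lemma Omega_iff: "w \<in> Omega K r \<xi> \<longleftrightarrow> lin_indep_over K r w \<and> w (r - 1) = \<xi>"
  unfolding Omega_def lin_indep_over_def by blast

lemma hgt_eq: "hgt av K r w = inverse (vnorm av r w) * unimodular_inf av K r w"
  unfolding hgt_def unimodular_inf_def by simp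

lemma unimodular_iff: "unimodular av K r l \<longleftrightarrow> (\<forall>i<r. l i \<in> K) \<and> vnorm av r l = 1"
  unfolding unimodular_def vnorm_def by simp

lemma lincomb_bounded_belowD:
  "lincomb_bounded_below av K n w c \<Longrightarrow> \<forall>i<n. a i \<in> K \<Longrightarrow> i < n
    \<Longrightarrow> c * av (a i) \<le> av (\<Sum>i<n. a i * w i)"
  unfolding lincomb_bounded_below_def by blast

lemma vnorm_ge: "i < r \<Longrightarrow> av (v i) \<le> vnorm av r v"
  unfolding vnorm_def by (rule Max_ge) auto

lemma vnorm_attained: "0 < r \<Longrightarrow> \<exists>i<r. av (v i) = vnorm av r v"
proof -
  assume "0 < r"
  then have "vnorm av r v \<in> (\<lambda>i. av (v i)) ` {..<r}"
    unfolding vnorm_def by (intro Max_in) auto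
  then show ?thesis by auto
qed

lemma vnorm_least: "0 < r \<Longrightarrow> (\<And>i. i < r \<Longrightarrow> av (v i) \<le> B) \<Longrightarrow> vnorm av r v \<le> B"
  using vnorm_attained by metis

lemma unimodular_attains_one: "unimodular av K r l \<Longrightarrow> 0 < r \<Longrightarrow> \<exists>k<r. av (l k) = 1"
  unfolding unimodular_iff using vnorm_attained by metis

lemma GL_K_row_ne_zero:
  assumes "g \<in> GL_K K r" and "i < r"
  shows "\<exists>k<r. g i k \<noteq> 0"
proof -
  from assms(1) obtain d where "\<forall>i<r. \<forall>k<r. (\<Sum>l<r. g i l * d l k) = (if i = k then 1 else 0)"
    unfolding GL_K_def by blast
  then have "(\<Sum>l<r. g i l * d l i) = 1" using assms(2) by simp
  then show ?thesis
    by (metis (no_types, lifting) lessThan_iff mult_zero_left sum.neutral zero_neq_one)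
qed

lemma lincomb_matvec:
  "(\<Sum>i<r. l i * matvec r g w i) = (\<Sum>k<r. (\<Sum>i<r. l i * g i k) * w k)"
  unfolding matvec_def sum_distrib_left sum_distrib_right mult.assoc by (rule sum.swap)

lemma vecmat_mult_right_inverse:
  fixes g d :: "nat \<Rightarrow> nat \<Rightarrow> 'a::comm_ring_1"
  assumes "\<forall>i<r. \<forall>k<r. (\<Sum>m<r. g i m * d m k) = (if i = k then 1 else 0)" and "k < r"
  shows "(\<Sum>m<r. (\<Sum>i<r. l i * g i m) * d m k) = l k"
proof -
  have "(\<Sum>m<r. (\<Sum>i<r. l i * g i m) * d m k) = (\<Sum>i<r. l i * (\<Sum>m<r. g i m * d m k))"
    unfolding sum_distrib_left sum_distrib_right mult.assoc by (rule sum.swap)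
  also have "\<dots> = (\<Sum>i<r. if i = k then l i else 0)"
    using assms by (intro sum.cong) auto
  also have "\<dots> = l k"
    using assms(2) by simp
  finally show ?thesis .
qed

lemma av_limI_inverse_Suc:
  assumes "\<And>m. av (X m - a) < inverse (Suc m)"
  shows "av_lim av X a"
  unfolding av_lim_def
proof (intro allI impI)
  fix e :: real assume "0 < e"
  then obtain N where N: "inverse (Suc N) < e"
    using reals_Archimedean by blast
  have "av (X n - a) < e" if "N \<le> n" for n
  proof -
    have "inverse (real (Suc n)) \<le> inverse (Suc N)"
      using that by (simp add: le_imp_inverse_le)
    then show ?thesis
      using assms[of n] N by linarith
  qed
  then show "\<exists>N. \<forall>n\<ge>N. av (X n - a) < e"
    by blast
qed

context
  fixes K :: "'a::field set"
  assumes sf: "is_subfield K"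
begin

lemma subfield_0: "0 \<in> K"
  using sf unfolding is_subfield_def by blast

lemma subfield_1: "1 \<in> K"
  using sf unfolding is_subfield_def by blast

lemma subfield_add: "x \<in> K \<Longrightarrow> y \<in> K \<Longrightarrow> x + y \<in> K"
  using sf unfolding is_subfield_def by blast

lemma subfield_mult: "x \<in> K \<Longrightarrow> y \<in> K \<Longrightarrow> x * y \<in> K"
  using sf unfolding is_subfield_def by blast

lemma subfield_uminus: "x \<in> K \<Longrightarrow> - x \<in> K"
  using sf unfolding is_subfield_def by blast

lemma subfield_inverse: "x \<in> K \<Longrightarrow> inverse x \<in> K"
  using sf unfolding is_subfield_def by blast

lemma subfield_diff: "x \<in> K \<Longrightarrow> y \<in> K \<Longrightarrow> x - y \<in> K"
  using subfield_add subfield_uminus by (metis diff_conv_add_uminus)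

lemma subfield_divide: "x \<in> K \<Longrightarrow> y \<in> K \<Longrightarrow> x / y \<in> K"
  using subfield_mult subfield_inverse by (simp add: divide_inverse)

lemma subfield_sum: "(\<And>i. i < (n::nat) \<Longrightarrow> f i \<in> K) \<Longrightarrow> (\<Sum>i<n. f i) \<in> K"
  by (induction n) (simp_all add: subfield_0 subfield_add)

lemma lin_indep_over_Suc: "lin_indep_over K (Suc n) w \<Longrightarrow> lin_indep_over K n w"
  unfolding lin_indep_over_def
proof (intro allI impI)
  fix a i
  assume indep: "\<forall>a. (\<forall>i<Suc n. a i \<in> K) \<longrightarrow> (\<Sum>i<Suc n. a i * w i) = 0 \<longrightarrow> (\<forall>i<Suc n. a i = 0)"
    and aK: "\<forall>i<n. a i \<in> K" and sum_0: "(\<Sum>i<n. a i * w i) = 0" and "i < n"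
  define b where "b = a(n := 0)"
  have bK: "\<forall>i<Suc n. b i \<in> K"
    using aK subfield_0 by (auto simp: b_def less_Suc_eq)
  have "(\<Sum>i<n. b i * w i) = (\<Sum>i<n. a i * w i)"
    by (intro sum.cong) (auto simp: b_def)
  then have "(\<Sum>i<Suc n. b i * w i) = 0"
    using sum_0 by (simp add: b_def)
  with bK indep \<open>i < n\<close> have "b i = 0"
    by simp
  with \<open>i < n\<close> show "a i = 0"
    by (simp add: b_def)
qed

end

context
  fixes av :: "'a::field \<Rightarrow> real"
  assumes na: "nonarch_abs av"
begin

lemma av_nonneg: "0 \<le> av x"
  using na unfolding nonarch_abs_def by blast

lemma av_eq_0_iff: "av x = 0 \<longleftrightarrow> x = 0"
  using na unfolding nonarch_abs_def by blast

lemma av_mult: "av (x * y) = av x * av y"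
  using na unfolding nonarch_abs_def by blast

lemma av_add_le: "av (x + y) \<le> max (av x) (av y)"
  using na unfolding nonarch_abs_def by blast

lemma av_0 [simp]: "av 0 = 0"
  using av_eq_0_iff by blast

lemma av_pos: "x \<noteq> 0 \<Longrightarrow> 0 < av x"
  using av_nonneg av_eq_0_iff by (metis less_eq_real_def)

lemma av_1 [simp]: "av 1 = 1"
  using av_mult[of 1 1] av_eq_0_iff[of 1] by simp

lemma av_minus [simp]: "av (- x) = av x"
proof -
  have "av (-1) * av (-1) = 1"
    using av_mult[of "-1" "-1"] by simp
  then have "av (-1) = 1"
    using av_nonneg[of "-1"] by (metis abs_of_nonneg abs_square_eq_1 power2_eq_square)
  then show ?thesis
    using av_mult[of "-1" x] by simp
qed

lemma av_inverse: "av (inverse x) = inverse (av x)"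
proof (cases "x = 0")
  case False
  then have "av x * av (inverse x) = 1"
    using av_mult[of x "inverse x"] by simp
  then show ?thesis
    by (rule inverse_unique[symmetric])
qed simp

lemma av_diff_le: "av (x - y) \<le> max (av x) (av y)"
  using av_add_le[of x "- y"] by simp

lemma av_diff_commute: "av (x - y) = av (y - x)"
  using av_minus[of "y - x"] by simp

lemma av_sum_le:
  assumes "\<And>i. i < (n::nat) \<Longrightarrow> av (f i) \<le> B" and "0 \<le> B"
  shows "av (\<Sum>i<n. f i) \<le> B"
  using assms(1)
proof (induction n)
  case (Suc n)
  then have "av (\<Sum>i<n. f i) \<le> B" and "av (f n) \<le> B"
    by simp_all
  then show ?case
    using av_add_le[of "\<Sum>i<n. f i" "f n"] by simp
qed (simp add: assms(2))

lemma av_sum_mult_le: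
  assumes "\<And>i. i < (n::nat) \<Longrightarrow> av (x i) \<le> A" "\<And>i. i < n \<Longrightarrow> av (y i) \<le> B" "0 \<le> A" "0 \<le> B"
  shows "av (\<Sum>i<n. x i * y i) \<le> A * B"
  using assms by (intro av_sum_le) (simp_all add: av_mult av_nonneg mult_mono)

lemma vnorm_nonneg: "0 < r \<Longrightarrow> 0 \<le> vnorm av r v"
  using vnorm_attained av_nonneg by metis

lemma vnorm_scale: "0 < r \<Longrightarrow> vnorm av r (\<lambda>i. c * v i) = av c * vnorm av r v"
proof (rule antisym)
  assume "0 < r"
  show "vnorm av r (\<lambda>i. c * v i) \<le> av c * vnorm av r v"
    using \<open>0 < r\<close> by (intro vnorm_least) (simp_all add: av_mult av_nonneg mult_left_mono vnorm_ge)
  obtain i where "i < r" "av (v i) = vnorm av r v"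
    using vnorm_attained[OF \<open>0 < r\<close>] by blast
  then show "av c * vnorm av r v \<le> vnorm av r (\<lambda>i. c * v i)"
    using vnorm_ge[where av = av and v = "\<lambda>i. c * v i", OF \<open>i < r\<close>] by (simp add: av_mult)
qed

lemma av_lincomb_le: "0 < r \<Longrightarrow> av (\<Sum>i<r. v i * w i) \<le> vnorm av r v * vnorm av r w"
  by (intro av_sum_mult_le) (simp_all add: vnorm_ge vnorm_nonneg)

lemma vnorm_matvec_le:
  assumes "0 < r" and "\<And>i k. i < r \<Longrightarrow> k < r \<Longrightarrow> av (g i k) \<le> C" and "0 \<le> C"
  shows "vnorm av r (matvec r g w) \<le> C * vnorm av r w"
  unfolding matvec_def using assms
  by (intro vnorm_least av_sum_mult_le) (simp_all add: vnorm_ge vnorm_nonneg)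

lemma matrix_entries_bounded: "\<exists>C>0. \<forall>i<r. \<forall>k<r. av (g i k) \<le> C" for g :: "nat \<Rightarrow> nat \<Rightarrow> 'a"
proof (intro exI conjI allI impI)
  fix i k assume "i < r" "k < r"
  have "av (g i k) \<le> (\<Sum>k<r. av (g i k))"
    using \<open>k < r\<close> by (intro member_le_sum) (simp_all add: av_nonneg)
  also have "\<dots> \<le> (\<Sum>i<r. \<Sum>k<r. av (g i k))"
    using \<open>i < r\<close> by (intro member_le_sum) (simp_all add: av_nonneg sum_nonneg)
  finally show "av (g i k) \<le> 1 + (\<Sum>i<r. \<Sum>k<r. av (g i k))"
    by simp
qed (simp add: add_pos_nonneg sum_nonneg av_nonneg)

lemma GL_K_vnorm_row_pos: "g \<in> GL_K K r \<Longrightarrow> i < r \<Longrightarrow> 0 < vnorm av r (g i)"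
  using GL_K_row_ne_zero vnorm_ge av_pos by (metis order.strict_trans2)

lemma av_jfac: "av (jfac r \<xi> g w) = av (matvec r g w (r - 1)) / av \<xi>"
  by (simp add: jfac_def av_mult av_inverse divide_inverse mult.commute)

lemma av_lim_add:
  assumes "av_lim av X a" and "av_lim av Y b"
  shows "av_lim av (\<lambda>m. X m + Y m) (a + b)"
  unfolding av_lim_def
proof (intro allI impI)
  fix e :: real assume "0 < e"
  then obtain M N where M: "\<forall>n\<ge>M. av (X n - a) < e" and N: "\<forall>n\<ge>N. av (Y n - b) < e"
    using assms unfolding av_lim_def by meson
  have "av (X n + Y n - (a + b)) < e" if "max M N \<le> n" for n
    using that M[rule_format, of n] N[rule_format, of n] av_add_le[of "X n - a" "Y n - b"]
    by (simp add: algebra_simps)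
  then show "\<exists>N. \<forall>n\<ge>N. av (X n + Y n - (a + b)) < e"
    by blast
qed

lemma av_lim_mult_right:
  assumes "av_lim av X a"
  shows "av_lim av (\<lambda>m. X m * c) (a * c)"
proof (cases "c = 0")
  case False
  show ?thesis
    unfolding av_lim_def
  proof (intro allI impI)
    fix e :: real assume "0 < e"
    then obtain N where "\<forall>n\<ge>N. av (X n - a) < e / av c"
      using assms av_pos[OF False] unfolding av_lim_def by (meson divide_pos_pos)
    then have "av (X n * c - a * c) < e" if "N \<le> n" for n
      using that av_pos[OF False]
      by (simp add: av_mult[symmetric] left_diff_distrib pos_less_divide_eq)
    then show "\<exists>N. \<forall>n\<ge>N. av (X n * c - a * c) < e"
      by blast
  qed
qed (simp add: av_lim_def)

lemma av_lim_sum: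
  assumes "\<And>i. i < (n::nat) \<Longrightarrow> av_lim av (\<lambda>m. X m i) (L i)"
  shows "av_lim av (\<lambda>m. \<Sum>i<n. X m i) (\<Sum>i<n. L i)"
  using assms
proof (induction n)
  case 0
  then show ?case
    by (simp add: av_lim_def)
next
  case (Suc n)
  then show ?case
    by (simp add: av_lim_add)
qed

lemma av_lim_unique:
  assumes "av_lim av X a" and "av_lim av X b"
  shows "a = b"
proof (rule ccontr)
  assume "a \<noteq> b"
  then have "0 < av (a - b)"
    by (simp add: av_pos)
  then obtain M N where M: "\<forall>n\<ge>M. av (X n - a) < av (a - b)" and N: "\<forall>n\<ge>N. av (X n - b) < av (a - b)"
    using assms unfolding av_lim_def by meson
  define n where "n = max M N"
  have "av (a - b) = av ((X n - b) - (X n - a))"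
    by simp
  also have "\<dots> \<le> max (av (X n - b)) (av (X n - a))"
    by (rule av_diff_le)
  also have "\<dots> < av (a - b)"
    using M N n_def by simp
  finally show False
    by simp
qed

lemma av_lim_imp_cauchy:
  assumes "av_lim av X a"
  shows "av_cauchy av X"
  unfolding av_cauchy_def
proof (intro allI impI)
  fix e :: real assume "0 < e"
  then obtain N where N: "\<forall>n\<ge>N. av (X n - a) < e"
    using assms unfolding av_lim_def by blast
  have "av (X m - X n) < e" if "N \<le> m" "N \<le> n" for m n
    using N[rule_format, of m] N[rule_format, of n] that av_diff_le[of "X m - a" "X n - a"]
    by simp
  then show "\<exists>N. \<forall>m\<ge>N. \<forall>n\<ge>N. av (X m - X n) < e"
    by blast
qed

lemma av_cauchy_dominated:
  assumes "0 < c" and "\<And>m n. c * av (X m - X n) \<le> av (Y m - Y n)" and "av_cauchy av Y"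
  shows "av_cauchy av X"
  unfolding av_cauchy_def
proof (intro allI impI)
  fix e :: real assume "0 < e"
  then obtain N where N: "\<forall>m\<ge>N. \<forall>n\<ge>N. av (Y m - Y n) < c * e"
    using assms(1,3) unfolding av_cauchy_def by (meson mult_pos_pos)
  have "av (X m - X n) < e" if "N \<le> m" "N \<le> n" for m n
  proof -
    have "c * av (X m - X n) < c * e"
      using assms(2)[of m n] N[rule_format, OF that] by linarith
    with \<open>0 < c\<close> show ?thesis
      by simp
  qed
  then show "\<exists>N. \<forall>m\<ge>N. \<forall>n\<ge>N. av (X m - X n) < e"
    by blast
qed

context
  fixes K :: "'a set"
  assumes sf: "is_subfield K"
begin

lemma last_coeff_bound:
  assumes dist: "\<And>b. \<forall>i<n. b i \<in> K \<Longrightarrow> d \<le> av (w n - (\<Sum>i<n. b i * w i))"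
    and aK: "\<forall>i<Suc n. a i \<in> K"
  shows "d * av (a n) \<le> av (\<Sum>i<Suc n. a i * w i)"
proof (cases "a n = 0")
  case True
  then show ?thesis
    using av_nonneg by simp
next
  case False
  define b where "b i = - (a i / a n)" for i
  have "(\<Sum>i<Suc n. a i * w i) = a n * (w n - (\<Sum>i<n. b i * w i))"
    using False by (simp add: b_def sum_distrib_left right_diff_distrib sum_negf algebra_simps)
  moreover have "\<forall>i<n. b i \<in> K"
    using aK subfield_divide[OF sf] subfield_uminus[OF sf] by (simp add: b_def)
  ultimately show ?thesis
    using mult_right_mono[OF dist[of b] av_nonneg[of "a n"]]
    by (simp add: av_mult mult.commute)
qed

lemma lincomb_prefix_le:
  assumes "0 < d" and dist: "\<And>b. \<forall>i<n. b i \<in> K \<Longrightarrow> d \<le> av (w n - (\<Sum>i<n. b i * w i))"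
    and aK: "\<forall>i<Suc n. a i \<in> K"
  shows "av (\<Sum>i<n. a i * w i) \<le> av (\<Sum>i<Suc n. a i * w i) * max 1 (av (w n) / d)"
proof -
  define x where "x = (\<Sum>i<Suc n. a i * w i)"
  define M where "M = max 1 (av (w n) / d)"
  have "av (a n) \<le> av x / d"
    using last_coeff_bound[OF dist aK] \<open>0 < d\<close> by (simp add: x_def pos_le_divide_eq mult.commute)
  then have "av (a n) * av (w n) \<le> av x / d * av (w n)"
    by (rule mult_right_mono) (rule av_nonneg)
  also have "\<dots> = av x * (av (w n) / d)"
    by simp
  also have "\<dots> \<le> av x * M"
    by (intro mult_left_mono) (simp_all add: M_def av_nonneg)
  finally have "av (a n * w n) \<le> av x * M"
    by (simp add: av_mult)
  moreover have "av x \<le> av x * M"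
    using mult_left_mono[of 1 M "av x"] av_nonneg[of x] by (simp add: M_def)
  moreover have "(\<Sum>i<n. a i * w i) = x - a n * w n"
    by (simp add: x_def)
  ultimately have "av (\<Sum>i<n. a i * w i) \<le> av x * M"
    using av_diff_le[of x "a n * w n"] by simp
  then show ?thesis
    by (simp add: x_def M_def)
qed

lemma lincomb_bounded_below_Suc:
  assumes bounded: "lincomb_bounded_below av K n w c" and "0 < d"
    and dist: "\<And>b. \<forall>i<n. b i \<in> K \<Longrightarrow> d \<le> av (w n - (\<Sum>i<n. b i * w i))"
  shows "lincomb_bounded_below av K (Suc n) w (min d (c / max 1 (av (w n) / d)))"
  unfolding lincomb_bounded_below_def
proof (intro allI impI)
  fix a i assume aK: "\<forall>i<Suc n. a i \<in> K" and "i < Suc n"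
  define M where "M = max 1 (av (w n) / d)"
  define x where "x = (\<Sum>i<Suc n. a i * w i)"
  show "min d (c / M) * av (a i) \<le> av x"
  proof (cases "i = n")
    case True
    then show ?thesis
      using order_trans[OF mult_right_mono[OF min.cobounded1 av_nonneg] last_coeff_bound[OF dist aK]]
      by (simp add: x_def)
  next
    case False
    then have "c * av (a i) \<le> av (\<Sum>i<n. a i * w i)"
      using lincomb_bounded_belowD[OF bounded, of a i] aK \<open>i < Suc n\<close> by simp
    also have "\<dots> \<le> av x * M"
      unfolding x_def M_def by (rule lincomb_prefix_le[OF \<open>0 < d\<close> dist aK])
    finally have "c / M * av (a i) \<le> av x"
      by (simp add: M_def pos_divide_le_eq mult.commute mult.left_commute)
    then show ?thesis
      using order_trans[OF mult_right_mono[OF min.cobounded2 av_nonneg]] by blast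
  qed
qed

lemma unimodular_exists: "0 < r \<Longrightarrow> \<exists>l. unimodular av K r l"
proof
  assume "0 < r"
  show "unimodular av K r (\<lambda>i. if i = 0 then 1 else 0)"
    unfolding unimodular_def
    using \<open>0 < r\<close> subfield_0[OF sf] subfield_1[OF sf]
    by (intro conjI allI impI Max_eqI) auto
qed

lemma unimodular_inf_le: "unimodular av K r l \<Longrightarrow> unimodular_inf av K r w \<le> av (\<Sum>i<r. l i * w i)"
  unfolding unimodular_inf_def
  by (rule cInf_lower) (auto intro: bdd_belowI[of _ 0] simp: av_nonneg)

lemma unimodular_inf_greatest:
  assumes "0 < r" and "\<And>l. unimodular av K r l \<Longrightarrow> B \<le> av (\<Sum>i<r. l i * w i)"
  shows "B \<le> unimodular_inf av K r w"
  unfolding unimodular_inf_def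
  using unimodular_exists[OF \<open>0 < r\<close>] assms(2) by (intro cInf_greatest) auto

lemma unimodular_inf_nonneg: "0 < r \<Longrightarrow> 0 \<le> unimodular_inf av K r w"
  by (rule unimodular_inf_greatest) (simp_all add: av_nonneg)

lemma vnorm_mult_unimodular_inf_le:
  assumes "0 < r" and vK: "\<forall>i<r. v i \<in> K"
  shows "vnorm av r v * unimodular_inf av K r w \<le> av (\<Sum>i<r. v i * w i)"
proof -
  obtain k where "k < r" and k: "av (v k) = vnorm av r v"
    using vnorm_attained[OF \<open>0 < r\<close>] by blast
  show ?thesis
  proof (cases "v k = 0")
    case True
    then show ?thesis
      using k av_nonneg by simp
  next
    case False
    define u where "u i = inverse (v k) * v i" for i
    have "vnorm av r v \<noteq> 0"
      using False k av_eq_0_iff by metis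
    then have "vnorm av r u = 1"
      unfolding u_def using vnorm_scale[OF \<open>0 < r\<close>] k by (simp add: av_inverse)
    moreover have "\<forall>i<r. u i \<in> K"
      using vK \<open>k < r\<close> subfield_mult[OF sf] subfield_inverse[OF sf] by (simp add: u_def)
    ultimately have "unimodular_inf av K r w \<le> av (\<Sum>i<r. u i * w i)"
      by (intro unimodular_inf_le) (simp add: unimodular_iff)
    moreover have "(\<Sum>i<r. v i * w i) = v k * (\<Sum>i<r. u i * w i)"
      using False by (simp add: u_def sum_distrib_left mult.assoc[symmetric])
    ultimately show ?thesis
      using k av_nonneg[of "v k"] by (simp add: av_mult mult_left_mono)
  qed
qed

lemma unimodular_inf_scale:
  assumes "0 < r" and "c \<noteq> 0"
  shows "unimodular_inf av K r (\<lambda>i. c * w i) = av c * unimodular_inf av K r w"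
proof -
  have lincomb: "av (\<Sum>i<r. l i * (c * w i)) = av c * av (\<Sum>i<r. l i * w i)" for l
    by (simp add: av_mult[symmetric] sum_distrib_left mult.left_commute)
  have "0 < av c"
    using av_pos[OF \<open>c \<noteq> 0\<close>] .
  show ?thesis
  proof (rule antisym)
    have "unimodular_inf av K r (\<lambda>i. c * w i) / av c \<le> unimodular_inf av K r w"
      using unimodular_inf_le[of r _ "\<lambda>i. c * w i"] \<open>0 < av c\<close>
      by (intro unimodular_inf_greatest[OF \<open>0 < r\<close>]) (simp add: lincomb pos_divide_le_eq mult.commute)
    then show "unimodular_inf av K r (\<lambda>i. c * w i) \<le> av c * unimodular_inf av K r w"
      using \<open>0 < av c\<close> by (simp add: pos_divide_le_eq mult.commute)
    show "av c * unimodular_inf av K r w \<le> unimodular_inf av K r (\<lambda>i. c * w i)"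
      using unimodular_inf_le[of r _ w] \<open>0 < av c\<close>
      by (intro unimodular_inf_greatest[OF \<open>0 < r\<close>]) (simp add: lincomb)
  qed
qed

lemma hgt_scale:
  assumes "0 < r" and "c \<noteq> 0"
  shows "hgt av K r (\<lambda>i. c * w i) = hgt av K r w"
  using av_pos[OF \<open>c \<noteq> 0\<close>]
  by (simp add: hgt_eq unimodular_inf_scale[OF assms] vnorm_scale[OF \<open>0 < r\<close>])

lemma unimodular_inf_matvec_ge:
  assumes "0 < r" and gK: "\<forall>i<r. \<forall>k<r. g i k \<in> K"
    and gd: "\<forall>i<r. \<forall>k<r. (\<Sum>m<r. g i m * d m k) = (if i = k then 1 else 0)"
    and dD: "\<And>i k. i < r \<Longrightarrow> k < r \<Longrightarrow> av (d i k) \<le> D" and "0 < D"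
  shows "unimodular_inf av K r w / D \<le> unimodular_inf av K r (matvec r g w)"
proof (rule unimodular_inf_greatest[OF \<open>0 < r\<close>])
  fix l assume l: "unimodular av K r l"
  define u where "u k = (\<Sum>i<r. l i * g i k)" for k
  have uK: "\<forall>k<r. u k \<in> K"
    using l gK unfolding u_def unimodular_iff
    by (auto intro!: subfield_sum[OF sf] subfield_mult[OF sf])
  obtain k where "k < r" and "av (l k) = 1"
    using unimodular_attains_one[OF l \<open>0 < r\<close>] by blast
  then have "1 = av (\<Sum>m<r. u m * d m k)"
    using vecmat_mult_right_inverse[OF gd] by (simp add: u_def)
  also have "\<dots> \<le> vnorm av r u * D"
    using \<open>0 < r\<close> \<open>k < r\<close> \<open>0 < D\<close>
    by (intro av_sum_mult_le) (simp_all add: vnorm_ge dD vnorm_nonneg)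
  finally have "unimodular_inf av K r w * 1 \<le> unimodular_inf av K r w * (vnorm av r u * D)"
    by (rule mult_left_mono) (rule unimodular_inf_nonneg[OF \<open>0 < r\<close>])
  then have "unimodular_inf av K r w / D \<le> vnorm av r u * unimodular_inf av K r w"
    using \<open>0 < D\<close> by (simp add: pos_divide_le_eq mult.commute mult.left_commute)
  also have "\<dots> \<le> av (\<Sum>k<r. u k * w k)"
    by (rule vnorm_mult_unimodular_inf_le[OF \<open>0 < r\<close> uK])
  also have "\<dots> = av (\<Sum>i<r. l i * matvec r g w i)"
    by (simp add: lincomb_matvec u_def)
  finally show "unimodular_inf av K r w / D \<le> av (\<Sum>i<r. l i * matvec r g w i)" .
qed

lemma hgt_matvec_ge:
  assumes "0 < r" and gK: "\<forall>i<r. \<forall>k<r. g i k \<in> K"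
    and gd: "\<forall>i<r. \<forall>k<r. (\<Sum>m<r. g i m * d m k) = (if i = k then 1 else 0)"
    and gC: "\<And>i k. i < r \<Longrightarrow> k < r \<Longrightarrow> av (g i k) \<le> C" and "0 < C"
    and dD: "\<And>i k. i < r \<Longrightarrow> k < r \<Longrightarrow> av (d i k) \<le> D" and "0 < D"
    and pos: "0 < vnorm av r (matvec r g w)"
  shows "hgt av K r w / (C * D) \<le> hgt av K r (matvec r g w)"
proof -
  have "vnorm av r (matvec r g w) \<le> C * vnorm av r w"
    using vnorm_matvec_le[OF \<open>0 < r\<close> gC] \<open>0 < C\<close> by simp
  then have "inverse (C * vnorm av r w) \<le> inverse (vnorm av r (matvec r g w))"
    using pos by (rule le_imp_inverse_le)
  moreover have "unimodular_inf av K r w / D \<le> unimodular_inf av K r (matvec r g w)"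
    by (rule unimodular_inf_matvec_ge[OF \<open>0 < r\<close> gK gd dD \<open>0 < D\<close>])
  ultimately have "inverse (C * vnorm av r w) * (unimodular_inf av K r w / D)
      \<le> inverse (vnorm av r (matvec r g w)) * unimodular_inf av K r (matvec r g w)"
    using \<open>0 < D\<close> pos unimodular_inf_nonneg[OF \<open>0 < r\<close>]
    by (intro mult_mono) simp_all
  then show ?thesis
    by (simp add: hgt_eq field_simps)
qed

lemma vnorm_row_mult_unimodular_inf_le:
  assumes "0 < r" and "i < r" and gK: "\<forall>i<r. \<forall>k<r. g i k \<in> K"
  shows "vnorm av r (g i) * unimodular_inf av K r w \<le> av (matvec r g w i)"
  unfolding matvec_def using assms by (intro vnorm_mult_unimodular_inf_le) simp_all

lemma hgt_le_jfac:
  assumes "0 < r" and "\<xi> \<noteq> 0" and w_last: "w (r - 1) = \<xi>"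
    and gK: "\<forall>i<r. \<forall>k<r. g i k \<in> K" and R_pos: "0 < vnorm av r (g (r - 1))"
  shows "hgt av K r w \<le> av \<xi> / vnorm av r (g (r - 1)) * av (jfac r \<xi> g w) * inverse (vnorm av r w)"
    and "av \<xi> / vnorm av r (g (r - 1)) * av (jfac r \<xi> g w) * inverse (vnorm av r w) \<le> 1"
proof -
  define R where "R = vnorm av r (g (r - 1))"
  define W where "W = vnorm av r w"
  define a where "a = av (matvec r g w (r - 1))"
  have "0 < av \<xi>"
    using av_pos[OF \<open>\<xi> \<noteq> 0\<close>] .
  have "0 < W"
    using vnorm_ge[of "r - 1" r av w] \<open>0 < r\<close> w_last \<open>0 < av \<xi>\<close> by (simp add: W_def)
  have c1_jfac: "av \<xi> / R * av (jfac r \<xi> g w) * inverse W = a / R / W"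
    using \<open>0 < av \<xi>\<close> by (simp add: av_jfac a_def divide_inverse)
  have "R * unimodular_inf av K r w \<le> a"
    unfolding R_def a_def using \<open>0 < r\<close> gK by (intro vnorm_row_mult_unimodular_inf_le) simp_all
  then have "unimodular_inf av K r w / W \<le> a / R / W"
    using R_pos \<open>0 < W\<close> by (intro divide_right_mono) (simp_all add: R_def pos_le_divide_eq mult.commute)
  then show "hgt av K r w \<le> av \<xi> / R * av (jfac r \<xi> g w) * inverse (vnorm av r w)"
    unfolding c1_jfac[unfolded W_def] by (simp add: hgt_eq W_def divide_inverse mult.commute)
  have "a \<le> R * W"
    unfolding a_def R_def W_def matvec_def using \<open>0 < r\<close> by (rule av_lincomb_le)
  then show "av \<xi> / R * av (jfac r \<xi> g w) * inverse (vnorm av r w) \<le> 1"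
    unfolding c1_jfac[unfolded W_def] using R_pos \<open>0 < W\<close> by (simp add: R_def W_def field_simps)
qed

lemma vnorm_gact_le:
  assumes "0 < r" and gK: "\<forall>i<r. \<forall>k<r. g i k \<in> K"
    and gC: "\<And>i k. i < r \<Longrightarrow> k < r \<Longrightarrow> av (g i k) \<le> C" and "0 < C"
    and R_pos: "0 < vnorm av r (g (r - 1))" and I_pos: "0 < unimodular_inf av K r w"
  shows "vnorm av r (gact r \<xi> g w) \<le> C * av \<xi> / vnorm av r (g (r - 1)) * inverse (hgt av K r w)"
proof -
  define R where "R = vnorm av r (g (r - 1))"
  define I where "I = unimodular_inf av K r w"
  define a where "a = av (matvec r g w (r - 1))"
  have "R * I \<le> a"
    unfolding R_def I_def a_def using \<open>0 < r\<close> gK by (intro vnorm_row_mult_unimodular_inf_le) simp_all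
  moreover have "0 < R * I"
    using R_pos I_pos by (simp add: R_def I_def)
  ultimately have "0 < a"
    by linarith
  have "vnorm av r (gact r \<xi> g w) = av \<xi> / a * vnorm av r (matvec r g w)"
    unfolding gact_def vnorm_scale[OF \<open>0 < r\<close>]
    by (simp add: av_inverse av_jfac a_def)
  also have "\<dots> \<le> av \<xi> / a * (C * vnorm av r w)"
    using vnorm_matvec_le[OF \<open>0 < r\<close> gC] \<open>0 < C\<close> \<open>0 < a\<close> av_nonneg[of \<xi>]
    by (intro mult_left_mono) simp_all
  also have "\<dots> \<le> av \<xi> / (R * I) * (C * vnorm av r w)"
    using \<open>R * I \<le> a\<close> \<open>0 < R * I\<close> \<open>0 < C\<close> av_nonneg[of \<xi>] vnorm_nonneg[OF \<open>0 < r\<close>, of w]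
    by (intro mult_right_mono divide_left_mono) simp_all
  also have "\<dots> = C * av \<xi> / R * inverse (hgt av K r w)"
    by (simp add: hgt_eq I_def field_simps)
  finally show ?thesis
    by (simp add: R_def)
qed

lemma hgt_gact_ge:
  assumes "0 < r" and "\<xi> \<noteq> 0" and last_ne_0: "matvec r g w (r - 1) \<noteq> 0"
    and gK: "\<forall>i<r. \<forall>k<r. g i k \<in> K"
    and gd: "\<forall>i<r. \<forall>k<r. (\<Sum>m<r. g i m * d m k) = (if i = k then 1 else 0)"
    and gC: "\<And>i k. i < r \<Longrightarrow> k < r \<Longrightarrow> av (g i k) \<le> C" and "0 < C"
    and dD: "\<And>i k. i < r \<Longrightarrow> k < r \<Longrightarrow> av (d i k) \<le> D" and "0 < D"
  shows "1 / (C * D) * hgt av K r w \<le> hgt av K r (gact r \<xi> g w)"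
proof -
  have "jfac r \<xi> g w \<noteq> 0"
    using \<open>\<xi> \<noteq> 0\<close> last_ne_0 by (simp add: jfac_def)
  then have "hgt av K r (gact r \<xi> g w) = hgt av K r (matvec r g w)"
    unfolding gact_def by (simp add: hgt_scale[OF \<open>0 < r\<close>])
  moreover have "0 < vnorm av r (matvec r g w)"
    using vnorm_ge[of "r - 1" r av "matvec r g w"] av_pos[OF last_ne_0] \<open>0 < r\<close> by simp
  then have "hgt av K r w / (C * D) \<le> hgt av K r (matvec r g w)"
    using hgt_matvec_ge[OF \<open>0 < r\<close> gK gd gC \<open>0 < C\<close> dD \<open>0 < D\<close>] by blast
  ultimately show ?thesis
    by simp
qed

context
  assumes complete: "\<forall>X. av_cauchy av X \<longrightarrow> (\<exists>L. av_lim av X L)"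
    and closed: "\<forall>X L. (\<forall>n. X n \<in> K) \<longrightarrow> av_lim av X L \<longrightarrow> L \<in> K"
begin

lemma lincomb_limit_in_span:
  fixes n :: nat
  assumes "0 < c" and bounded: "lincomb_bounded_below av K n w c"
    and AK: "\<And>m i. i < n \<Longrightarrow> A m i \<in> K"
    and lim: "av_lim av (\<lambda>m. \<Sum>i<n. A m i * w i) z"
  shows "\<exists>L. (\<forall>i<n. L i \<in> K) \<and> z = (\<Sum>i<n. L i * w i)"
proof -
  have "\<exists>L. av_lim av (\<lambda>m. A m i) L" if "i < n" for i
  proof -
    have "av_cauchy av (\<lambda>m. A m i)"
    proof (rule av_cauchy_dominated[OF \<open>0 < c\<close> _ av_lim_imp_cauchy[OF lim]])
      fix m k
      have "(\<Sum>i<n. (A m i - A k i) * w i) = (\<Sum>i<n. A m i * w i) - (\<Sum>i<n. A k i * w i)"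
        by (simp add: left_diff_distrib sum_subtractf)
      then show "c * av (A m i - A k i) \<le> av ((\<Sum>i<n. A m i * w i) - (\<Sum>i<n. A k i * w i))"
        using lincomb_bounded_belowD[OF bounded, of "\<lambda>i. A m i - A k i" i] that AK subfield_diff[OF sf]
        by simp
    qed
    then show ?thesis
      using complete by blast
  qed
  then obtain L where L: "\<And>i. i < n \<Longrightarrow> av_lim av (\<lambda>m. A m i) (L i)"
    by metis
  have "av_lim av (\<lambda>m. \<Sum>i<n. A m i * w i) (\<Sum>i<n. L i * w i)"
    by (rule av_lim_sum) (simp add: av_lim_mult_right L)
  then have "z = (\<Sum>i<n. L i * w i)"
    using av_lim_unique[OF lim] by blast
  moreover have "L i \<in> K" if "i < n" for i
    using closed[rule_format, OF _ L[OF that]] AK[OF that] by blast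
  ultimately show ?thesis
    by blast
qed

lemma dist_to_span_pos:
  assumes indep: "lin_indep_over K (Suc n) w" and "0 < c" and bounded: "lincomb_bounded_below av K n w c"
  shows "\<exists>d>0. \<forall>a. (\<forall>i<n. a i \<in> K) \<longrightarrow> d \<le> av (w n - (\<Sum>i<n. a i * w i))"
proof (rule ccontr)
  assume "\<not> ?thesis"
  then have "\<forall>m. \<exists>a. (\<forall>i<n. a i \<in> K) \<and> av (w n - (\<Sum>i<n. a i * w i)) < inverse (Suc m)"
    by (metis not_le inverse_positive_iff_positive of_nat_0_less_iff zero_less_Suc)
  then obtain A where AK: "\<And>m i. i < n \<Longrightarrow> A m i \<in> K"
    and close: "\<And>m. av (w n - (\<Sum>i<n. A m i * w i)) < inverse (Suc m)"
    by metis
  have lim: "av_lim av (\<lambda>m. \<Sum>i<n. A m i * w i) (w n)"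
    by (intro av_limI_inverse_Suc) (metis close av_diff_commute)
  have "\<exists>L. (\<forall>i<n. L i \<in> K) \<and> w n = (\<Sum>i<n. L i * w i)"
    by (rule lincomb_limit_in_span[OF \<open>0 < c\<close> bounded _ lim]) (simp add: AK)
  then obtain L where LK: "\<forall>i<n. L i \<in> K" and w_n: "w n = (\<Sum>i<n. L i * w i)"
    by blast
  define b where "b = L(n := -1)"
  have bK: "\<forall>i<Suc n. b i \<in> K"
    using LK subfield_1[OF sf] subfield_uminus[OF sf] by (auto simp: b_def less_Suc_eq)
  have "(\<Sum>i<n. b i * w i) = (\<Sum>i<n. L i * w i)"
    by (intro sum.cong) (auto simp: b_def)
  then have "(\<Sum>i<Suc n. b i * w i) = 0"
    using w_n by (simp add: b_def)
  with bK indep have "b n = 0"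
    unfolding lin_indep_over_def by blast
  then show False
    by (simp add: b_def)
qed

lemma lin_indep_imp_lincomb_bounded_below:
  assumes "lin_indep_over K n w"
  shows "\<exists>c>0. lincomb_bounded_below av K n w c"
  using assms
proof (induction n)
  case 0
  show ?case
    by (intro exI[of _ 1]) (simp add: lincomb_bounded_below_def)
next
  case (Suc n)
  obtain c where "0 < c" and bounded: "lincomb_bounded_below av K n w c"
    using Suc.IH lin_indep_over_Suc[OF sf Suc.prems] by blast
  obtain d where "0 < d" and "\<forall>b. (\<forall>i<n. b i \<in> K) \<longrightarrow> d \<le> av (w n - (\<Sum>i<n. b i * w i))"
    using dist_to_span_pos[OF Suc.prems \<open>0 < c\<close> bounded] by blast
  then have "lincomb_bounded_below av K (Suc n) w (min d (c / max 1 (av (w n) / d)))"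
    by (intro lincomb_bounded_below_Suc[OF bounded]) simp_all
  moreover have "0 < min d (c / max 1 (av (w n) / d))"
    using \<open>0 < c\<close> \<open>0 < d\<close> by simp
  ultimately show ?case
    by blast
qed

lemma unimodular_inf_pos:
  assumes "0 < r" and "lin_indep_over K r w"
  shows "0 < unimodular_inf av K r w"
proof -
  obtain c where "0 < c" and bounded: "lincomb_bounded_below av K r w c"
    using lin_indep_imp_lincomb_bounded_below[OF assms(2)] by blast
  have "c \<le> unimodular_inf av K r w"
  proof (rule unimodular_inf_greatest[OF \<open>0 < r\<close>])
    fix l assume l: "unimodular av K r l"
    then obtain k where "k < r" and "av (l k) = 1"
      using unimodular_attains_one[OF l \<open>0 < r\<close>] by blast
    then show "c \<le> av (\<Sum>i<r. l i * w i)"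
      using lincomb_bounded_belowD[OF bounded] l unfolding unimodular_iff by force
  qed
  with \<open>0 < c\<close> show ?thesis
    by simp
qed

lemma gact_estimates:
  assumes "0 < r" and "\<xi> \<noteq> 0" and "w \<in> Omega K r \<xi>" and gK: "\<forall>i<r. \<forall>k<r. g i k \<in> K"
    and gd: "\<forall>i<r. \<forall>k<r. (\<Sum>m<r. g i m * d m k) = (if i = k then 1 else 0)"
    and gC: "\<And>i k. i < r \<Longrightarrow> k < r \<Longrightarrow> av (g i k) \<le> C" and "0 < C"
    and dD: "\<And>i k. i < r \<Longrightarrow> k < r \<Longrightarrow> av (d i k) \<le> D" and "0 < D"
    and R_pos: "0 < vnorm av r (g (r - 1))"
  shows "hgt av K r w \<le> av \<xi> / vnorm av r (g (r - 1)) * av (jfac r \<xi> g w) * inverse (vnorm av r w) \<and>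
    av \<xi> / vnorm av r (g (r - 1)) * av (jfac r \<xi> g w) * inverse (vnorm av r w) \<le> 1 \<and>
    vnorm av r (gact r \<xi> g w) \<le> C * av \<xi> / vnorm av r (g (r - 1)) * inverse (hgt av K r w) \<and>
    1 / (C * D) * hgt av K r w \<le> hgt av K r (gact r \<xi> g w)"
proof -
  have indep: "lin_indep_over K r w" and w_last: "w (r - 1) = \<xi>"
    using \<open>w \<in> Omega K r \<xi>\<close> by (simp_all add: Omega_iff)
  have I_pos: "0 < unimodular_inf av K r w"
    by (rule unimodular_inf_pos[OF \<open>0 < r\<close> indep])
  have "0 < vnorm av r (g (r - 1)) * unimodular_inf av K r w"
    using R_pos I_pos by simp
  also have "\<dots> \<le> av (matvec r g w (r - 1))"
    using \<open>0 < r\<close> gK by (intro vnorm_row_mult_unimodular_inf_le) simp_all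
  finally have "matvec r g w (r - 1) \<noteq> 0"
    by auto
  then show ?thesis
    using hgt_le_jfac[where w = w, OF \<open>0 < r\<close> \<open>\<xi> \<noteq> 0\<close> w_last gK R_pos]
      vnorm_gact_le[OF \<open>0 < r\<close> gK gC \<open>0 < C\<close> R_pos I_pos]
      hgt_gact_ge[OF \<open>0 < r\<close> \<open>\<xi> \<noteq> 0\<close> _ gK gd gC \<open>0 < C\<close> dD \<open>0 < D\<close>]
    by blast
qed

end

end

end

theorem lemma3p5:
  fixes av :: "'a::field \<Rightarrow> real" and K :: "'a set" and \<xi> :: 'a
    and r :: nat and g :: "nat \<Rightarrow> nat \<Rightarrow> 'a"
  assumes "Cinf_setup av K" and "\<xi> \<noteq> 0" and "1 \<le> r" and "g \<in> GL_K K r"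
  shows "\<exists>c1 c2 c3. 0 < c1 \<and> 0 < c2 \<and> 0 < c3 \<and>
    (\<forall>w\<in>Omega K r \<xi>.
       hgt av K r w \<le> c1 * av (jfac r \<xi> g w) * inverse (vnorm av r w) \<and>
       c1 * av (jfac r \<xi> g w) * inverse (vnorm av r w) \<le> 1 \<and>
       vnorm av r (gact r \<xi> g w) \<le> c2 * inverse (hgt av K r w) \<and>
       c3 * hgt av K r w \<le> hgt av K r (gact r \<xi> g w))"
proof -
  have na: "nonarch_abs av" and sf: "is_subfield K"
    and complete: "\<forall>X. av_cauchy av X \<longrightarrow> (\<exists>L. av_lim av X L)"
    and closed: "\<forall>X L. (\<forall>n. X n \<in> K) \<longrightarrow> av_lim av X L \<longrightarrow> L \<in> K"
    using assms(1) unfolding Cinf_setup_def by blast+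
  have "0 < r"
    using \<open>1 \<le> r\<close> by simp
  obtain d where gK: "\<forall>i<r. \<forall>k<r. g i k \<in> K"
    and gd: "\<forall>i<r. \<forall>k<r. (\<Sum>m<r. g i m * d m k) = (if i = k then 1 else 0)"
    using \<open>g \<in> GL_K K r\<close> unfolding GL_K_def by blast
  obtain C where "0 < C" and gC: "\<forall>i<r. \<forall>k<r. av (g i k) \<le> C"
    using matrix_entries_bounded[OF na] by blast
  obtain D where "0 < D" and dD: "\<forall>i<r. \<forall>k<r. av (d i k) \<le> D"
    using matrix_entries_bounded[OF na] by blast
  have R_pos: "0 < vnorm av r (g (r - 1))"
    using GL_K_vnorm_row_pos[OF na \<open>g \<in> GL_K K r\<close>] \<open>0 < r\<close> by simp
  have "\<forall>w\<in>Omega K r \<xi>.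
       hgt av K r w \<le> av \<xi> / vnorm av r (g (r - 1)) * av (jfac r \<xi> g w) * inverse (vnorm av r w) \<and>
       av \<xi> / vnorm av r (g (r - 1)) * av (jfac r \<xi> g w) * inverse (vnorm av r w) \<le> 1 \<and>
       vnorm av r (gact r \<xi> g w) \<le> C * av \<xi> / vnorm av r (g (r - 1)) * inverse (hgt av K r w) \<and>
       1 / (C * D) * hgt av K r w \<le> hgt av K r (gact r \<xi> g w)"
    using gact_estimates[OF na sf complete closed \<open>0 < r\<close> \<open>\<xi> \<noteq> 0\<close> _ gK gd _ \<open>0 < C\<close> _ \<open>0 < D\<close> R_pos]
      gC dD by blast
  then show ?thesis
    using \<open>0 < C\<close> \<open>0 < D\<close> R_pos av_pos[OF na \<open>\<xi> \<noteq> 0\<close>]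
    by (intro exI[of _ "av \<xi> / vnorm av r (g (r - 1))"] exI[of _ "C * av \<xi> / vnorm av r (g (r - 1))"]
        exI[of _ "1 / (C * D)"] conjI) simp_all
qed

end
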